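(* Assume (H1), (H2) and the sequence setting (Seq). Let $x\in\mathrm{dom}\,J$, and for each $k$ let $(\bar u_{1,k},\dots,\bar u_{N,k})$ be any minimizer of the Lax problem at the point $(x_k,t_{1,k},\dots,t_{N,k})$. Then: (i) $\lim_{k\to\infty}\bar u_{j,k}=0$ for every $j=1,\dots,N$; (ii) if $\partial J(x)\ne\emptyset$ and $\alpha_{j,\infty}=0$, then $\lim_{k\to\infty}\bar u_{j,k}/t_{1,k}=0$; (iii) if $\partial J(x)\ne\emptyset$ and $\alpha_{j,\infty}\ne0$, then the sequence $(\bar u_{j,k}/t_{j,k})_k$ is bounded.
   Context: Hypothesis (H1): each $H_j:\mathbb{R}^n\to\mathbb{R}$ ($j=1,\dots,N$) is finite-valued, convex and 1-coercive (i.e. $H_j(p)/\|p\|\to+\infty$ as $\|p\|\to\infty$), and at least one $H_j$ is strictly convex. Hypothesis (H2): $J:\mathbb{R}^n\to\mathbb{R}\cup\{+\infty\}$ is proper, convex and lower semicontinuous. $H_j^*$ is the Legendre transform of $H_j$. The Lax problem at $(y,t_1,\dots,t_N)$ with all $t_j>0$ is: minimize $J(y-\sum_{j=1}^N u_j)+\sum_{j=1}^N t_jH_j^*(u_j/t_j)$ over $u_1,\dots,u_N\in\mathbb{R}^n$ (minimizers exist under (H1)-(H2)). Sequence setting (Seq): $x\in\mathbb{R}^n$; for each $j\in\{1,\dots,N\}$ and $k\in\mathbb{N}$, $t_{j,k}>0$ and $v_{j,k}\in\mathbb{R}^n$, with $t_{j,k}\to0$, $v_{j,k}\to v_{j,\infty}\in\mathbb{R}^n$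 and $t_{j,k}/t_{1,k}\to\alpha_{j,\infty}\in\mathbb{R}$ as $k\to\infty$; and $x_k=x+\sum_{j=1}^N t_{j,k}v_{j,k}$. *)

theory Defs
  imports "HOL-Analysis.Analysis" "HOL-Library.Extended_Real"
begin

definition strictly_convex :: "('a::real_vector \<Rightarrow> real) \<Rightarrow> bool" where
  "strictly_convex f \<longleftrightarrow>
     (\<forall>x y. \<forall>\<mu>::real. x \<noteq> y \<and> 0 < \<mu> \<and> \<mu> < 1 \<longrightarrow>
        f ((1 - \<mu>) *\<^sub>R x + \<mu> *\<^sub>R y) < (1 - \<mu>) * f x + \<mu> * f y)"

definition one_coercive :: "('a::real_normed_vector \<Rightarrow> real) \<Rightarrow> bool" where
  "one_coercive H \<longleftrightarrow> filterlim (\<lambda>p. H p / norm p) at_top at_infinity"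

definition H1 :: "nat \<Rightarrow> (nat \<Rightarrow> 'a::real_normed_vector \<Rightarrow> real) \<Rightarrow> bool" where
  "H1 N H \<longleftrightarrow> (\<forall>j\<in>{1..N}. convex_on UNIV (H j) \<and> one_coercive (H j))
              \<and> (\<exists>j\<in>{1..N}. strictly_convex (H j))"

definition ereal_convex :: "('a::real_vector \<Rightarrow> ereal) \<Rightarrow> bool" where
  "ereal_convex J \<longleftrightarrow>
     (\<forall>x y. \<forall>\<mu>::real. 0 < \<mu> \<and> \<mu> < 1 \<longrightarrow>
        J ((1 - \<mu>) *\<^sub>R x + \<mu> *\<^sub>R y) \<le> ereal (1 - \<mu>) * J x + ereal \<mu> * J y)"

definition proper_fun :: "('a \<Rightarrow> ereal) \<Rightarrow> bool" where
  "proper_fun J \<longleftrightarrow> (\<forall>x. J x \<noteq> -\<infinity>) \<and> (\<exists>x. J x \<noteq> \<infinity>)"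

definition lsc :: "('a::topological_space \<Rightarrow> ereal) \<Rightarrow> bool" where
  "lsc J \<longleftrightarrow> (\<forall>x. J x \<le> Liminf (at x) J)"

definition H2 :: "('a::real_normed_vector \<Rightarrow> ereal) \<Rightarrow> bool" where
  "H2 J \<longleftrightarrow> proper_fun J \<and> ereal_convex J \<and> lsc J"

definition edom :: "('a \<Rightarrow> ereal) \<Rightarrow> 'a set" where
  "edom J = {x. J x < \<infinity>}"

definition subdiff :: "('a::real_inner \<Rightarrow> ereal) \<Rightarrow> 'a \<Rightarrow> 'a set" where
  "subdiff J x = {s. \<forall>y. J y \<ge> J x + ereal (s \<bullet> (y - x))}"

text \<open>Legendre transform (finite-valued under (H1)).\<close>
definition legendre :: "('a::real_inner \<Rightarrow> real) \<Rightarrow> 'a \<Rightarrow> real" where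
  "legendre H p = (SUP q. p \<bullet> q - H q)"

definition lax_obj :: "nat \<Rightarrow> (nat \<Rightarrow> 'a::real_inner \<Rightarrow> real) \<Rightarrow> ('a \<Rightarrow> ereal)
                      \<Rightarrow> 'a \<Rightarrow> (nat \<Rightarrow> real) \<Rightarrow> (nat \<Rightarrow> 'a) \<Rightarrow> ereal" where
  "lax_obj N H J y t u =
     J (y - (\<Sum>j=1..N. u j)) + ereal (\<Sum>j=1..N. t j * legendre (H j) ((1 / t j) *\<^sub>R u j))"

definition lax_minimizer :: "nat \<Rightarrow> (nat \<Rightarrow> 'a::real_inner \<Rightarrow> real) \<Rightarrow> ('a \<Rightarrow> ereal)
                      \<Rightarrow> 'a \<Rightarrow> (nat \<Rightarrow> real) \<Rightarrow> (nat \<Rightarrow> 'a) \<Rightarrow> bool" where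
  "lax_minimizer N H J y t u \<longleftrightarrow>
     (\<forall>w. lax_obj N H J y t u \<le> lax_obj N H J y t w)"

end

theory Submission
  imports Defs
begin

text \<open>
  Comparing the minimiser \<open>ubar\<close> with the straight competitor \<open>u\<^sub>j = t\<^sub>j v\<^sub>j\<close>, for which
  \<open>x\<^sub>k - \<Sum>\<^sub>j u\<^sub>j = x\<close>, gives
  \<open>J(x\<^sub>k - \<Sum>\<^sub>j ubar\<^sub>j) + \<Sum>\<^sub>j t\<^sub>j H\<^sub>j\<^sup>*(ubar\<^sub>j / t\<^sub>j) \<le> J(x) + \<Sum>\<^sub>j t\<^sub>j H\<^sub>j\<^sup>*(v\<^sub>j)\<close>,
  whose right-hand side tends to \<open>J(x)\<close>. Being convex, lower semicontinuous and finite at \<open>x\<close>,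
  \<open>J\<close> lies above \<open>c - L |y - x|\<close>, while each \<open>H\<^sub>j\<^sup>*\<close> grows faster than any linear function
  because \<open>H\<^sub>j\<close> is 1-coercive; together this forces \<open>\<Sum>\<^sub>j |ubar\<^sub>j| \<longlonglongrightarrow> 0\<close>.

  If \<open>s \<in> \<partial>J(x)\<close>, the affine minorant \<open>J(x) + s \<bullet> (y - x)\<close> turns the same comparison into
  \<open>\<Sum>\<^sub>j t\<^sub>j G\<^sub>j(ubar\<^sub>j / t\<^sub>j) \<le> \<Sum>\<^sub>j t\<^sub>j G\<^sub>j(v\<^sub>j)\<close> for the Fenchel--Young gaps
  \<open>G\<^sub>j(p) = H\<^sub>j\<^sup>*(p) + H\<^sub>j(s) - p \<bullet> s \<ge> 0\<close>. The right-hand side is \<open>O(t\<^sub>1)\<close>, and since every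
  \<open>G\<^sub>j\<close> is again superlinear, \<open>R |ubar\<^sub>j| / t\<^sub>1 \<le> C + O(t\<^sub>j / t\<^sub>1)\<close> for every \<open>R\<close>, with \<open>C\<close>
  independent of \<open>R\<close>. This gives \<open>ubar\<^sub>j / t\<^sub>1 \<longlonglongrightarrow> 0\<close> when \<open>t\<^sub>j / t\<^sub>1 \<longlonglongrightarrow> 0\<close>, and a bound on
  \<open>ubar\<^sub>j / t\<^sub>j\<close> when \<open>t\<^sub>j / t\<^sub>1\<close> has a nonzero limit.
\<close>

lemma tendsto_zero_mult_Bseq:
  fixes f g :: "nat \<Rightarrow> real"
  assumes "f \<longlonglongrightarrow> 0" and "Bseq g"
  shows "(\<lambda>k. f k * g k) \<longlonglongrightarrow> 0"
proof -
  have "Zfun (\<lambda>k. f k * g k) sequentially"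
    using assms by (intro bounded_bilinear.Zfun_prod_Bfun[OF bounded_bilinear_mult])
      (simp_all add: tendsto_Zfun_iff)
  then show ?thesis by (simp add: tendsto_Zfun_iff)
qed

lemma tendsto_zero_if_scaled_bound:
  fixes f :: "nat \<Rightarrow> real"
  assumes nonneg: "\<And>k. 0 \<le> f k"
    and bound: "\<And>R. R > 0 \<Longrightarrow> \<exists>g. g \<longlonglongrightarrow> 0 \<and> (\<forall>k. R * f k \<le> C + g k)"
  shows "f \<longlonglongrightarrow> 0"
proof (rule LIMSEQ_I)
  fix \<epsilon> :: real assume "\<epsilon> > 0"
  define R where "R = (\<bar>C\<bar> + 1) / \<epsilon>"
  have "R > 0" using \<open>\<epsilon> > 0\<close> by (simp add: R_def)
  then obtain g where "g \<longlonglongrightarrow> 0" and g: "\<And>k. R * f k \<le> C + g k"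
    using bound by blast
  then obtain k0 where k0: "\<And>k. k \<ge> k0 \<Longrightarrow> g k < 1"
    using order_tendstoD(2)[of g 0 sequentially 1] by (auto simp: eventually_sequentially)
  have "(\<bar>C\<bar> + 1) * f k < (\<bar>C\<bar> + 1) * \<epsilon>" if "k \<ge> k0" for k
  proof -
    have "R * f k < \<bar>C\<bar> + 1" using g[of k] k0[OF that] abs_ge_self[of C] by linarith
    then show ?thesis using \<open>\<epsilon> > 0\<close> by (simp add: R_def field_simps)
  qed
  then have "f k < \<epsilon>" if "k \<ge> k0" for k
    using that mult_less_cancel_left_pos[of "\<bar>C\<bar> + 1"] by simp
  then show "\<exists>k0. \<forall>k\<ge>k0. norm (f k - 0) < \<epsilon>"
    using nonneg by auto
qed

lemma Bseq_sum:
  fixes f :: "'i \<Rightarrow> nat \<Rightarrow> 'a::real_normed_vector"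
  assumes "\<And>j. j \<in> I \<Longrightarrow> Bseq (f j)"
  shows "Bseq (\<lambda>k. \<Sum>j\<in>I. f j k)"
  using assms
  by (induction I rule: infinite_finite_induct) (auto simp: Bseq_eq_bounded intro: bounded_plus_comp)

lemma Bseq_scaleR:
  fixes f :: "nat \<Rightarrow> real" and g :: "nat \<Rightarrow> 'a::real_normed_vector"
  assumes "Bseq f" and "Bseq g"
  shows "Bseq (\<lambda>k. f k *\<^sub>R g k)"
proof -
  obtain K1 K2 where "K1 > 0" "\<And>k. norm (f k) \<le> K1" "\<And>k. norm (g k) \<le> K2"
    using assms unfolding Bseq_def by blast
  then have "norm (f k *\<^sub>R g k) \<le> K1 * K2" for k
    by (simp add: mult_mono)
  then show ?thesis by (rule BseqI')
qed

lemma one_coercive_ge_linear: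
  fixes H :: "'a::real_normed_vector \<Rightarrow> real"
  assumes "one_coercive H"
  obtains b where "b > 0" "\<And>q. b \<le> norm q \<Longrightarrow> K * norm q \<le> H q"
proof -
  have "eventually (\<lambda>p. K \<le> H p / norm p) at_infinity"
    using assms unfolding one_coercive_def filterlim_at_top by blast
  then obtain b where b: "\<And>q. b \<le> norm q \<Longrightarrow> K \<le> H q / norm q"
    by (auto simp: eventually_at_infinity)
  show thesis
  proof
    fix q :: 'a assume "max b 1 \<le> norm q"
    then have "K \<le> H q / norm q" "0 < norm q" using b[of q] by auto
    then show "K * norm q \<le> H q" by (simp add: pos_le_divide_eq)
  qed simp
qed

lemma convex_on_UNIV_bounded_cball:
  fixes H :: "'a::euclidean_space \<Rightarrow> real"
  assumes "convex_on UNIV H"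
  obtains M where "\<And>q. norm q \<le> r \<Longrightarrow> \<bar>H q\<bar> \<le> M"
proof -
  have "compact (H ` cball 0 r)"
    using convex_on_continuous[OF open_UNIV assms]
    by (intro compact_continuous_image) (auto intro: continuous_on_subset)
  then obtain M where "\<forall>y\<in>H ` cball 0 r. norm y \<le> M"
    using compact_imp_bounded bounded_iff by metis
  then show thesis by (intro that[of M]) auto
qed

definition fenchel_gap :: "('a::real_inner \<Rightarrow> real) \<Rightarrow> 'a \<Rightarrow> 'a \<Rightarrow> real" where
  "fenchel_gap H s p = legendre H p + H s - p \<bullet> s"

context
  fixes H :: "'a::euclidean_space \<Rightarrow> real"
  assumes convex: "convex_on UNIV H" and coercive: "one_coercive H"
begin

lemma legendre_objective_bounded_above:
  obtains C where "\<And>p q. norm p \<le> B \<Longrightarrow> p \<bullet> q - H q \<le> C"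
proof -
  define B' where "B' = max B 0"
  obtain b where b: "b > 0" "\<And>q. b \<le> norm q \<Longrightarrow> (B' + 1) * norm q \<le> H q"
    using one_coercive_ge_linear[OF coercive] by blast
  obtain M where M: "\<And>q. norm q \<le> b \<Longrightarrow> \<bar>H q\<bar> \<le> M"
    using convex_on_UNIV_bounded_cball[OF convex] by blast
  have "p \<bullet> q - H q \<le> B' * b + M" if p: "norm p \<le> B" for p q
  proof -
    have pq: "p \<bullet> q \<le> B' * norm q"
      using norm_cauchy_schwarz[of p q] p
      by (smt (verit) B'_def max.cobounded1 mult_right_mono norm_ge_zero)
    have "0 \<le> B' * b + M"
      using M[of 0] b(1) by (simp add: B'_def)
    moreover have "p \<bullet> q - H q \<le> B' * b + M" if "norm q < b"
      using pq M[of q] that mult_left_mono[of "norm q" b B'] by (simp add: B'_def)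
    moreover have "p \<bullet> q - H q \<le> 0" if "b \<le> norm q"
    proof -
      have "norm q + B' * norm q \<le> H q" using b(2)[OF that] by (simp add: algebra_simps)
      then show ?thesis using pq norm_ge_zero[of q] by linarith
    qed
    ultimately show ?thesis by (meson not_le order_trans)
  qed
  then show thesis by (rule that)
qed

lemma fenchel_young: "p \<bullet> q - H q \<le> legendre H p"
proof -
  obtain C where "\<And>p' q. norm p' \<le> norm p \<Longrightarrow> p' \<bullet> q - H q \<le> C"
    using legendre_objective_bounded_above[where B = "norm p"] by metis
  then show ?thesis
    unfolding legendre_def by (intro cSUP_upper bdd_aboveI2) auto
qed

lemma legendre_bounded_cball:
  obtains C where "\<And>p. norm p \<le> B \<Longrightarrow> \<bar>legendre H p\<bar> \<le> C"
proof -
  obtain C where C: "\<And>p q. norm p \<le> B \<Longrightarrow> p \<bullet> q - H q \<le> C"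
    using legendre_objective_bounded_above by blast
  have "\<bar>legendre H p\<bar> \<le> max C \<bar>H 0\<bar>" if "norm p \<le> B" for p
  proof -
    have "legendre H p \<le> C"
      unfolding legendre_def using C that by (intro cSUP_least) auto
    then show ?thesis using fenchel_young[of p 0] by auto
  qed
  then show thesis by (rule that)
qed

lemma legendre_superlinear:
  assumes "R \<ge> 0"
  obtains M where "\<And>p. R * norm p - M \<le> legendre H p"
proof -
  obtain M where M: "\<And>q. norm q \<le> R \<Longrightarrow> \<bar>H q\<bar> \<le> M"
    using convex_on_UNIV_bounded_cball[OF convex] by blast
  have "R * norm p - M \<le> legendre H p" for p
  proof (cases "p = 0")
    case True
    then show ?thesis using fenchel_young[of p 0] M[of 0] assms by auto
  next
    case False
    define q where "q = (R / norm p) *\<^sub>R p"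
    have "norm q = R" "p \<bullet> q = R * norm p"
      using False assms by (simp_all add: q_def power2_norm_eq_inner[symmetric] power2_eq_square)
    then show ?thesis using fenchel_young[of p q] M[of q] by auto
  qed
  then show thesis by (rule that)
qed

lemma Bseq_legendre:
  assumes "Bseq g"
  shows "Bseq (\<lambda>k. legendre H (g k))"
proof -
  obtain B where "\<And>k. norm (g k) \<le> B"
    using assms by (auto simp: Bseq_def)
  moreover obtain C where "\<And>p. norm p \<le> B \<Longrightarrow> \<bar>legendre H p\<bar> \<le> C"
    using legendre_bounded_cball by blast
  ultimately show ?thesis by (intro BseqI') auto
qed

lemma fenchel_gap_nonneg: "0 \<le> fenchel_gap H s p"
  using fenchel_young[of p s] by (simp add: fenchel_gap_def)

lemma fenchel_gap_superlinear:
  assumes "R \<ge> 0"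
  obtains M where "\<And>p. R * norm p - M \<le> fenchel_gap H s p"
proof -
  obtain M where M: "\<And>p. (R + norm s) * norm p - M \<le> legendre H p"
    using legendre_superlinear[of "R + norm s"] assms by auto
  have "R * norm p - (M - H s) \<le> fenchel_gap H s p" for p
    using M[of p] norm_cauchy_schwarz[of p s] by (simp add: fenchel_gap_def algebra_simps)
  then show thesis by (rule that)
qed

lemma Bseq_fenchel_gap:
  assumes "Bseq g"
  shows "Bseq (\<lambda>k. fenchel_gap H s (g k))"
proof -
  obtain B where B: "\<And>k. norm (g k) \<le> B"
    using assms by (auto simp: Bseq_def)
  obtain C where C: "\<And>k. \<bar>legendre H (g k)\<bar> \<le> C"
    using legendre_bounded_cball[of B] B by metis
  have gs: "\<bar>g k \<bullet> s\<bar> \<le> B * norm s" for k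
    using Cauchy_Schwarz_ineq2[of "g k" s] B[of k] by (meson mult_right_mono norm_ge_zero order_trans)
  have "\<bar>fenchel_gap H s (g k)\<bar> \<le> C + \<bar>H s\<bar> + B * norm s" for k
    using C[of k] gs[of k] unfolding fenchel_gap_def by linarith
  then show ?thesis by (intro BseqI') simp
qed

end

lemma ereal_convex_lower_bound_from_ball:
  fixes J :: "'a::real_normed_vector \<Rightarrow> ereal"
  assumes convex: "ereal_convex J" and no_MInf: "\<And>y. J y \<noteq> -\<infinity>"
    and Jx: "J x = ereal a" and "d > 0"
    and ball: "\<And>z. dist z x < d \<Longrightarrow> ereal (a - 1) < J z"
  shows "ereal (a - 1 - 2 / d * norm (y - x)) \<le> J y"
proof (cases "dist y x < d")
  case True
  have "ereal (a - 1 - 2 / d * norm (y - x)) \<le> ereal (a - 1)"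
    using \<open>d > 0\<close> by simp
  also have "\<dots> \<le> J y" using ball[OF True] by simp
  finally show ?thesis .
next
  case False
  show ?thesis
  proof (cases "J y")
    case (real b)
    define n where "n = norm (y - x)"
    define \<mu> where "\<mu> = d / (2 * n)"
    have "n \<ge> d" using False by (simp add: n_def dist_norm)
    then have n: "n > 0" and \<mu>: "0 < \<mu>" "\<mu> < 1"
      using \<open>d > 0\<close> by (auto simp: \<mu>_def field_simps)
    \<comment> \<open>the point of the segment from \<open>x\<close> to \<open>y\<close> at distance \<open>d/2\<close> from \<open>x\<close>\<close>
    define z where "z = (1 - \<mu>) *\<^sub>R x + \<mu> *\<^sub>R y"
    have "z - x = \<mu> *\<^sub>R (y - x)" by (simp add: z_def algebra_simps)
    then have "dist z x = d / 2"
      using n \<mu> \<open>d > 0\<close> by (simp add: dist_norm n_def[symmetric] \<mu>_def)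
    then have "ereal (a - 1) < J z" using ball \<open>d > 0\<close> by simp
    also have "J z \<le> ereal (1 - \<mu>) * J x + ereal \<mu> * J y"
      using convex \<mu> unfolding ereal_convex_def z_def by blast
    also have "\<dots> = ereal ((1 - \<mu>) * a + \<mu> * b)"
      using Jx real by simp
    finally have "1 / \<mu> > a - b" using \<mu> by (simp add: field_simps)
    moreover have "1 / \<mu> = 2 / d * n" using n by (simp add: \<mu>_def)
    ultimately show ?thesis using real by (simp add: n_def)
  qed (use no_MInf in auto)
qed

lemma H2_lower_bound:
  fixes J :: "'a::real_normed_vector \<Rightarrow> ereal"
  assumes "H2 J" and "x \<in> edom J"
  obtains c L where "L \<ge> 0" "\<And>y. ereal (c - L * norm (y - x)) \<le> J y"
proof -
  have no_MInf: "\<And>y. J y \<noteq> -\<infinity>" and "ereal_convex J" "lsc J"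
    using assms(1) by (auto simp: H2_def proper_fun_def)
  obtain a where a: "J x = ereal a"
    using assms(2) no_MInf by (cases "J x") (auto simp: edom_def)
  have "ereal (a - 1) < J x" using a by simp
  also have "J x \<le> Liminf (at x) J" using \<open>lsc J\<close> unfolding lsc_def by blast
  finally have "ereal (a - 1) < Liminf (at x) J" .
  then have "eventually (\<lambda>z. ereal (a - 1) < J z) (at x)" by (rule less_LiminfD)
  then obtain d where d: "d > 0" "\<And>z. z \<noteq> x \<Longrightarrow> dist z x < d \<Longrightarrow> ereal (a - 1) < J z"
    by (auto simp: eventually_at)
  have "ereal (a - 1) < J z" if "dist z x < d" for z
    using d that a by (cases "z = x") auto
  then have "ereal (a - 1 - 2 / d * norm (y - x)) \<le> J y" for y
    using ereal_convex_lower_bound_from_ball[OF \<open>ereal_convex J\<close> no_MInf a \<open>d > 0\<close>] by blast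
  then show thesis using d(1) by (intro that[of "2 / d"]) auto
qed

lemma lax_minimizer_le_straight_competitor:
  fixes H :: "nat \<Rightarrow> 'a::real_inner \<Rightarrow> real"
  assumes "lax_minimizer N H J (x + (\<Sum>j=1..N. t j *\<^sub>R v j)) t u"
    and "\<And>j. j \<in> {1..N} \<Longrightarrow> t j \<noteq> 0"
  shows "J (x + (\<Sum>j=1..N. t j *\<^sub>R v j) - (\<Sum>j=1..N. u j))
           + ereal (\<Sum>j=1..N. t j * legendre (H j) ((1 / t j) *\<^sub>R u j))
         \<le> J x + ereal (\<Sum>j=1..N. t j * legendre (H j) (v j))"
proof -
  have "(\<Sum>j=1..N. t j * legendre (H j) ((1 / t j) *\<^sub>R (t j *\<^sub>R v j)))
        = (\<Sum>j=1..N. t j * legendre (H j) (v j))"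
    using assms(2) by (intro sum.cong) auto
  then have "lax_obj N H J (x + (\<Sum>j=1..N. t j *\<^sub>R v j)) t (\<lambda>j. t j *\<^sub>R v j)
      = J x + ereal (\<Sum>j=1..N. t j * legendre (H j) (v j))"
    by (simp add: lax_obj_def)
  moreover have "lax_obj N H J (x + (\<Sum>j=1..N. t j *\<^sub>R v j)) t u
      \<le> lax_obj N H J (x + (\<Sum>j=1..N. t j *\<^sub>R v j)) t (\<lambda>j. t j *\<^sub>R v j)"
    using assms(1) unfolding lax_minimizer_def by blast
  ultimately show ?thesis by (simp add: lax_obj_def)
qed

lemma sum_perspective_legendre_lower:
  assumes "\<And>j. j \<in> I \<Longrightarrow> t j > 0"
    and "\<And>j p. j \<in> I \<Longrightarrow> R * norm p - M j \<le> legendre (H j) p"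
  shows "R * (\<Sum>j\<in>I. norm (u j)) - (\<Sum>j\<in>I. t j * M j)
         \<le> (\<Sum>j\<in>I. t j * legendre (H j) ((1 / t j) *\<^sub>R u j))"
proof -
  have "R * norm (u j) - t j * M j \<le> t j * legendre (H j) ((1 / t j) *\<^sub>R u j)" if "j \<in> I" for j
  proof -
    have "t j * (R * norm ((1 / t j) *\<^sub>R u j) - M j) \<le> t j * legendre (H j) ((1 / t j) *\<^sub>R u j)"
      using assms(1)[OF that] by (intro mult_left_mono assms(2)[OF that]) simp
    then show ?thesis using assms(1)[OF that] by (simp add: algebra_simps)
  qed
  then show ?thesis
    by (simp add: sum_distrib_left sum_subtractf[symmetric] sum_mono)
qed

lemma sum_perspective_fenchel_gap:
  assumes "\<And>j. j \<in> I \<Longrightarrow> t j \<noteq> 0"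
  shows "(\<Sum>j\<in>I. t j * fenchel_gap (H j) s ((1 / t j) *\<^sub>R u j))
         = (\<Sum>j\<in>I. t j * legendre (H j) ((1 / t j) *\<^sub>R u j)) - s \<bullet> (\<Sum>j\<in>I. u j)
             + (\<Sum>j\<in>I. t j * H j s)"
proof -
  have "t j * fenchel_gap (H j) s ((1 / t j) *\<^sub>R u j)
        = t j * legendre (H j) ((1 / t j) *\<^sub>R u j) - s \<bullet> u j + t j * H j s" if "j \<in> I" for j
    using assms[OF that] by (simp add: fenchel_gap_def algebra_simps inner_commute)
  then show ?thesis
    by (simp add: sum.distrib sum_subtractf inner_sum_right)
qed

text \<open>
  The sequence setting (Seq) together with a minimiser \<open>ubar\<close> at every point.
\<close>

locale lax_sequence =
  fixes N :: nat
    and H :: "nat \<Rightarrow> 'a::euclidean_space \<Rightarrow> real"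
    and J :: "'a \<Rightarrow> ereal"
    and x :: 'a
    and t :: "nat \<Rightarrow> nat \<Rightarrow> real"
    and v :: "nat \<Rightarrow> nat \<Rightarrow> 'a"
    and v_inf :: "nat \<Rightarrow> 'a"
    and xs :: "nat \<Rightarrow> 'a"
    and ubar :: "nat \<Rightarrow> nat \<Rightarrow> 'a"
  assumes H_convex: "\<And>j. j \<in> {1..N} \<Longrightarrow> convex_on UNIV (H j)"
    and H_coercive: "\<And>j. j \<in> {1..N} \<Longrightarrow> one_coercive (H j)"
    and hJ: "H2 J"
    and t_pos: "\<And>j k. j \<in> {1..N} \<Longrightarrow> t j k > 0"
    and t_lim: "\<And>j. j \<in> {1..N} \<Longrightarrow> (\<lambda>k. t j k) \<longlonglongrightarrow> 0"
    and v_lim: "\<And>j. j \<in> {1..N} \<Longrightarrow> (\<lambda>k. v j k) \<longlonglongrightarrow> v_inf j"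
    and xs_def: "\<And>k. xs k = x + (\<Sum>j=1..N. t j k *\<^sub>R v j k)"
    and x_dom: "x \<in> edom J"
    and minimizer: "\<And>k. lax_minimizer N H J (xs k) (\<lambda>j. t j k) (\<lambda>j. ubar j k)"
begin

definition minimizer_cost :: "nat \<Rightarrow> real" where
  "minimizer_cost k = (\<Sum>j=1..N. t j k * legendre (H j) ((1 / t j k) *\<^sub>R ubar j k))"

definition competitor_cost :: "nat \<Rightarrow> real" where
  "competitor_cost k = (\<Sum>j=1..N. t j k * legendre (H j) (v j k))"

lemma J_x_finite:
  obtains jx where "J x = ereal jx"
  using hJ x_dom by (cases "J x") (auto simp: H2_def proper_fun_def edom_def)

lemma t_nonzero: "j \<in> {1..N} \<Longrightarrow> t j k \<noteq> 0"
  using t_pos less_irrefl by metis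

lemma minimizer_cost_le_competitor:
  "J (xs k - (\<Sum>j=1..N. ubar j k)) + ereal (minimizer_cost k) \<le> J x + ereal (competitor_cost k)"
  using lax_minimizer_le_straight_competitor[OF minimizer[of k, unfolded xs_def] t_nonzero]
  unfolding minimizer_cost_def competitor_cost_def xs_def .

lemma xs_minus_x_tendsto_zero: "(\<lambda>k. xs k - x) \<longlonglongrightarrow> 0"
  unfolding xs_def
  by (auto intro!: tendsto_null_sum tendsto_scaleR[THEN tendsto_eq_rhs] t_lim v_lim)

lemma Bseq_v: "j \<in> {1..N} \<Longrightarrow> Bseq (\<lambda>k. v j k)"
  using convergent_imp_Bseq convergentI v_lim by blast

lemma competitor_cost_tendsto_zero: "competitor_cost \<longlonglongrightarrow> 0"
  unfolding competitor_cost_def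
  by (intro tendsto_null_sum tendsto_zero_mult_Bseq t_lim Bseq_legendre H_convex H_coercive Bseq_v)

lemma minimizer_length_bound:
  assumes "L \<ge> 0" and J_lower: "\<And>y. ereal (c - L * norm (y - x)) \<le> J y"
    and jx: "J x = ereal jx"
    and M: "\<And>j p. j \<in> {1..N} \<Longrightarrow> (R + L) * norm p - M j \<le> legendre (H j) p"
  shows "R * (\<Sum>j=1..N. norm (ubar j k))
         \<le> (jx - c) + (competitor_cost k + L * norm (xs k - x) + (\<Sum>j=1..N. t j k * M j))"
proof -
  define U where "U = (\<Sum>j=1..N. norm (ubar j k))"
  define y where "y = xs k - (\<Sum>j=1..N. ubar j k)"
  have "c - L * norm (y - x) + minimizer_cost k \<le> jx + competitor_cost k"
    using order_trans[OF add_right_mono[OF J_lower[of y]]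
        minimizer_cost_le_competitor[of k, folded y_def]] jx
    by simp
  moreover have "norm (y - x) \<le> norm (xs k - x) + U"
  proof -
    have "y - x = (xs k - x) - (\<Sum>j=1..N. ubar j k)" by (simp add: y_def algebra_simps)
    then show ?thesis
      unfolding U_def by (metis order_trans[OF norm_triangle_ineq4 add_left_mono[OF norm_sum]])
  qed
  moreover have "(R + L) * U - (\<Sum>j=1..N. t j k * M j) \<le> minimizer_cost k"
    unfolding U_def minimizer_cost_def using t_pos M by (intro sum_perspective_legendre_lower) auto
  ultimately show ?thesis
    unfolding U_def[symmetric] using mult_left_mono[OF \<open>norm (y - x) \<le> _\<close> \<open>L \<ge> 0\<close>]
    by (simp add: algebra_simps)
qed

lemma minimizers_sum_norm_tendsto_zero: "(\<lambda>k. \<Sum>j=1..N. norm (ubar j k)) \<longlonglongrightarrow> 0"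
proof -
  obtain c L where "L \<ge> 0" and J_lower: "\<And>y. ereal (c - L * norm (y - x)) \<le> J y"
    using H2_lower_bound[OF hJ x_dom] by metis
  obtain jx where jx: "J x = ereal jx" by (rule J_x_finite)
  have "\<exists>g. g \<longlonglongrightarrow> 0 \<and> (\<forall>k. R * (\<Sum>j=1..N. norm (ubar j k)) \<le> (jx - c) + g k)"
    if "R > 0" for R
  proof -
    have "\<forall>j\<in>{1..N}. \<exists>M. \<forall>p. (R + L) * norm p - M \<le> legendre (H j) p"
      using legendre_superlinear[OF H_convex H_coercive] \<open>L \<ge> 0\<close> \<open>R > 0\<close>
      by (meson add_nonneg_nonneg less_imp_le)
    then obtain M where M: "\<And>j p. j \<in> {1..N} \<Longrightarrow> (R + L) * norm p - M j \<le> legendre (H j) p"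
      by metis
    have "(\<lambda>k. competitor_cost k + L * norm (xs k - x) + (\<Sum>j=1..N. t j k * M j)) \<longlonglongrightarrow> 0"
      using competitor_cost_tendsto_zero xs_minus_x_tendsto_zero
      by (auto intro!: tendsto_add_zero tendsto_mult_right_zero tendsto_norm_zero
          tendsto_null_sum tendsto_mult_left_zero t_lim)
    then show ?thesis
      using minimizer_length_bound[OF \<open>L \<ge> 0\<close> J_lower jx M] by blast
  qed
  moreover have "0 \<le> (\<Sum>j=1..N. norm (ubar j k))" for k
    by (simp add: sum_nonneg)
  ultimately show ?thesis
    by (intro tendsto_zero_if_scaled_bound) auto
qed

lemma minimizers_tendsto_zero:
  assumes "j \<in> {1..N}"
  shows "(\<lambda>k. ubar j k) \<longlonglongrightarrow> 0"
proof (rule tendsto_norm_zero_cancel, rule Lim_null_comparison)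
  have "norm (ubar j k) \<le> (\<Sum>j=1..N. norm (ubar j k))" for k
    by (rule member_le_sum[OF assms]) auto
  then show "\<forall>\<^sub>F k in sequentially. norm (norm (ubar j k)) \<le> (\<Sum>j=1..N. norm (ubar j k))"
    by simp
qed (rule minimizers_sum_norm_tendsto_zero)

lemma fenchel_gap_sum_le:
  assumes "s \<in> subdiff J x"
  shows "(\<Sum>j=1..N. t j k * fenchel_gap (H j) s ((1 / t j k) *\<^sub>R ubar j k))
         \<le> (\<Sum>j=1..N. t j k * fenchel_gap (H j) s (v j k))"
proof -
  define S where "S = (\<Sum>j=1..N. ubar j k)"
  define V where "V = (\<Sum>j=1..N. t j k *\<^sub>R v j k)"
  have "J x + ereal (s \<bullet> (xs k - S - x)) \<le> J (xs k - S)"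
    using assms by (simp add: subdiff_def)
  then have "J x + ereal (s \<bullet> (xs k - S - x)) + ereal (minimizer_cost k) \<le> J x + ereal (competitor_cost k)"
    using minimizer_cost_le_competitor[of k] unfolding S_def by (meson add_right_mono order_trans)
  moreover obtain jx where "J x = ereal jx" by (rule J_x_finite)
  moreover have "xs k - S - x = V - S" by (simp add: xs_def V_def)
  ultimately have "s \<bullet> (V - S) + minimizer_cost k \<le> competitor_cost k" by simp
  moreover have "(\<Sum>j=1..N. t j k * fenchel_gap (H j) s ((1 / t j k) *\<^sub>R ubar j k))
      = minimizer_cost k - s \<bullet> S + (\<Sum>j=1..N. t j k * H j s)"
    unfolding minimizer_cost_def S_def using t_nonzero by (rule sum_perspective_fenchel_gap)
  moreover have "(\<Sum>j=1..N. t j k * fenchel_gap (H j) s (v j k))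
      = competitor_cost k - s \<bullet> V + (\<Sum>j=1..N. t j k * H j s)"
    by (simp add: fenchel_gap_def competitor_cost_def V_def algebra_simps sum.distrib sum_subtractf
        inner_sum_right sum_distrib_left inner_commute)
  ultimately show ?thesis by (simp add: inner_diff_right)
qed

end

locale lax_sequence_with_ratios = lax_sequence +
  fixes \<alpha> :: "nat \<Rightarrow> real"
  assumes N_pos: "N \<ge> 1"
    and ratio_lim: "\<And>j. j \<in> {1..N} \<Longrightarrow> (\<lambda>k. t j k / t 1 k) \<longlonglongrightarrow> \<alpha> j"
begin

lemma t1_pos: "t 1 k > 0"
  using t_pos N_pos by simp

lemma fenchel_gap_bound:
  assumes "s \<in> subdiff J x"
  obtains C where "\<And>i k. i \<in> {1..N} \<Longrightarrow>
    t i k * fenchel_gap (H i) s ((1 / t i k) *\<^sub>R ubar i k) \<le> t 1 k * C"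
proof -
  have "Bseq (\<lambda>k. \<Sum>j=1..N. (t j k / t 1 k) * fenchel_gap (H j) s (v j k))"
  proof (rule Bseq_sum)
    fix j assume j: "j \<in> {1..N}"
    have "Bseq (\<lambda>k. t j k / t 1 k)"
      by (rule convergent_imp_Bseq[OF convergentI[OF ratio_lim[OF j]]])
    moreover have "Bseq (\<lambda>k. fenchel_gap (H j) s (v j k))"
      using j by (intro Bseq_fenchel_gap H_convex H_coercive Bseq_v)
    ultimately show "Bseq (\<lambda>k. (t j k / t 1 k) * fenchel_gap (H j) s (v j k))"
      by (rule Bseq_mult)
  qed
  then obtain C where "\<And>k. norm (\<Sum>j=1..N. (t j k / t 1 k) * fenchel_gap (H j) s (v j k)) \<le> C"
    unfolding Bseq_def by blast
  then have C: "(\<Sum>j=1..N. (t j k / t 1 k) * fenchel_gap (H j) s (v j k)) \<le> C" for k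
    by (simp add: abs_le_iff)
  have "t i k * fenchel_gap (H i) s ((1 / t i k) *\<^sub>R ubar i k) \<le> t 1 k * C"
    if "i \<in> {1..N}" for i k
  proof -
    have "t i k * fenchel_gap (H i) s ((1 / t i k) *\<^sub>R ubar i k)
          \<le> (\<Sum>j=1..N. t j k * fenchel_gap (H j) s ((1 / t j k) *\<^sub>R ubar j k))"
      using that t_pos by (intro member_le_sum mult_nonneg_nonneg fenchel_gap_nonneg
          H_convex H_coercive) (auto simp: less_imp_le)
    also have "\<dots> \<le> (\<Sum>j=1..N. t j k * fenchel_gap (H j) s (v j k))"
      using fenchel_gap_sum_le[OF assms] .
    also have "\<dots> = t 1 k * (\<Sum>j=1..N. (t j k / t 1 k) * fenchel_gap (H j) s (v j k))"
      using t1_pos[of k] by (simp add: sum_distrib_left)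
    also have "\<dots> \<le> t 1 k * C"
      using C t1_pos by (simp add: less_imp_le)
    finally show ?thesis .
  qed
  then show thesis by (rule that)
qed

lemma minimizer_over_t1_scaled_bound:
  assumes "s \<in> subdiff J x" and i: "i \<in> {1..N}"
  obtains C where "\<And>R. R \<ge> 0 \<Longrightarrow>
    \<exists>M. \<forall>k. R * norm ((1 / t 1 k) *\<^sub>R ubar i k) \<le> C + (t i k / t 1 k) * M"
proof -
  obtain C where C: "\<And>i k. i \<in> {1..N} \<Longrightarrow>
      t i k * fenchel_gap (H i) s ((1 / t i k) *\<^sub>R ubar i k) \<le> t 1 k * C"
    using fenchel_gap_bound[OF assms(1)] by blast
  have "\<exists>M. \<forall>k. R * norm ((1 / t 1 k) *\<^sub>R ubar i k) \<le> C + (t i k / t 1 k) * M"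
    if R: "R \<ge> 0" for R
  proof -
    obtain M where M: "\<And>p. R * norm p - M \<le> fenchel_gap (H i) s p"
      using fenchel_gap_superlinear[OF H_convex[OF i] H_coercive[OF i] R] by blast
    have "R * norm ((1 / t 1 k) *\<^sub>R ubar i k) \<le> C + (t i k / t 1 k) * M" for k
    proof -
      have "t i k * (R * norm ((1 / t i k) *\<^sub>R ubar i k) - M) \<le> t 1 k * C"
        using mult_left_mono[OF M less_imp_le[OF t_pos[OF i]]] C[OF i] order_trans by blast
      then have "R * norm (ubar i k) - t i k * M \<le> t 1 k * C"
        using t_pos[OF i, of k] by (simp add: algebra_simps)
      then show ?thesis
        using t1_pos[of k] by (simp add: field_simps)
    qed
    then show ?thesis by blast
  qed
  then show thesis by (rule that)
qed

lemma minimizer_over_t1_tendsto_zero: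
  assumes "subdiff J x \<noteq> {}" and i: "i \<in> {1..N}" and "\<alpha> i = 0"
  shows "(\<lambda>k. (1 / t 1 k) *\<^sub>R ubar i k) \<longlonglongrightarrow> 0"
proof -
  obtain s where "s \<in> subdiff J x" using assms(1) by blast
  then obtain C where C: "\<And>R. R \<ge> 0 \<Longrightarrow>
      \<exists>M. \<forall>k. R * norm ((1 / t 1 k) *\<^sub>R ubar i k) \<le> C + (t i k / t 1 k) * M"
    using minimizer_over_t1_scaled_bound i by blast
  have "(\<lambda>k. t i k / t 1 k) \<longlonglongrightarrow> 0"
    using ratio_lim[OF i] \<open>\<alpha> i = 0\<close> by simp
  then have "\<exists>g. g \<longlonglongrightarrow> 0 \<and> (\<forall>k. R * norm ((1 / t 1 k) *\<^sub>R ubar i k) \<le> C + g k)"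
    if "R > 0" for R
  proof -
    obtain M where "\<forall>k. R * norm ((1 / t 1 k) *\<^sub>R ubar i k) \<le> C + (t i k / t 1 k) * M"
      using C[of R] \<open>R > 0\<close> by (meson less_imp_le)
    moreover have "(\<lambda>k. (t i k / t 1 k) * M) \<longlonglongrightarrow> 0"
      by (rule tendsto_mult_left_zero) fact
    ultimately show ?thesis by blast
  qed
  from tendsto_zero_if_scaled_bound[OF norm_ge_zero this] show ?thesis
    by (rule tendsto_norm_zero_cancel)
qed

lemma minimizer_over_ti_bounded:
  assumes "subdiff J x \<noteq> {}" and i: "i \<in> {1..N}" and "\<alpha> i \<noteq> 0"
  shows "bounded (range (\<lambda>k. (1 / t i k) *\<^sub>R ubar i k))"
proof -
  obtain s where "s \<in> subdiff J x" using assms(1) by blast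
  then obtain C where "\<And>R. R \<ge> 0 \<Longrightarrow>
      \<exists>M. \<forall>k. R * norm ((1 / t 1 k) *\<^sub>R ubar i k) \<le> C + (t i k / t 1 k) * M"
    using minimizer_over_t1_scaled_bound i by blast
  then obtain M where CM: "\<And>k. norm ((1 / t 1 k) *\<^sub>R ubar i k) \<le> C + (t i k / t 1 k) * M"
    by (metis mult_1 zero_le_one)
  obtain B where B: "\<And>k. norm (t i k / t 1 k) \<le> B"
    using convergent_imp_Bseq[OF convergentI[OF ratio_lim[OF i]]] by (auto simp: Bseq_def)
  have "Bseq (\<lambda>k. (1 / t 1 k) *\<^sub>R ubar i k)"
  proof (rule BseqI')
    fix k
    have "(t i k / t 1 k) * M \<le> \<bar>t i k / t 1 k\<bar> * \<bar>M\<bar>"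
      by (metis abs_ge_self abs_mult)
    also have "\<dots> \<le> B * \<bar>M\<bar>"
      using B[of k] by (intro mult_right_mono) auto
    finally show "norm ((1 / t 1 k) *\<^sub>R ubar i k) \<le> C + B * \<bar>M\<bar>"
      using CM[of k] by linarith
  qed
  moreover have "Bseq (\<lambda>k. t 1 k / t i k)"
    using tendsto_inverse[OF ratio_lim[OF i] \<open>\<alpha> i \<noteq> 0\<close>]
    by (intro convergent_imp_Bseq convergentI) simp
  ultimately have "Bseq (\<lambda>k. (t 1 k / t i k) *\<^sub>R ((1 / t 1 k) *\<^sub>R ubar i k))"
    by (rule Bseq_scaleR[rotated])
  moreover have "(t 1 k / t i k) *\<^sub>R ((1 / t 1 k) *\<^sub>R ubar i k) = (1 / t i k) *\<^sub>R ubar i k" for k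
    using t1_pos[of k] by simp
  ultimately show ?thesis by (simp only: Bseq_eq_bounded)
qed

end

theorem proposition3p3:
  fixes N :: nat
    and H :: "nat \<Rightarrow> 'a::euclidean_space \<Rightarrow> real"
    and J :: "'a \<Rightarrow> ereal"
    and x :: 'a
    and t :: "nat \<Rightarrow> nat \<Rightarrow> real"
    and v :: "nat \<Rightarrow> nat \<Rightarrow> 'a"
    and v_inf :: "nat \<Rightarrow> 'a"
    and \<alpha> :: "nat \<Rightarrow> real"
    and xs :: "nat \<Rightarrow> 'a"
    and ubar :: "nat \<Rightarrow> nat \<Rightarrow> 'a"
  assumes N: "N \<ge> 1"
    and hH: "H1 N H"
    and hJ: "H2 J"
    and t_pos: "\<And>j k. j \<in> {1..N} \<Longrightarrow> t j k > 0"
    and t_lim: "\<And>j. j \<in> {1..N} \<Longrightarrow> (\<lambda>k. t j k) \<longlonglongrightarrow> 0"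
    and v_lim: "\<And>j. j \<in> {1..N} \<Longrightarrow> (\<lambda>k. v j k) \<longlonglongrightarrow> v_inf j"
    and ratio_lim: "\<And>j. j \<in> {1..N} \<Longrightarrow> (\<lambda>k. t j k / t 1 k) \<longlonglongrightarrow> \<alpha> j"
    and xs_def: "\<And>k. xs k = x + (\<Sum>j=1..N. t j k *\<^sub>R v j k)"
    and x_dom: "x \<in> edom J"
    and min: "\<And>k. lax_minimizer N H J (xs k) (\<lambda>j. t j k) (\<lambda>j. ubar j k)"
  shows "(\<forall>j\<in>{1..N}. (\<lambda>k. ubar j k) \<longlonglongrightarrow> 0)
       \<and> (\<forall>j\<in>{1..N}. subdiff J x \<noteq> {} \<and> \<alpha> j = 0 \<longrightarrow>
            (\<lambda>k. (1 / t 1 k) *\<^sub>R ubar j k) \<longlonglongrightarrow> 0)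
       \<and> (\<forall>j\<in>{1..N}. subdiff J x \<noteq> {} \<and> \<alpha> j \<noteq> 0 \<longrightarrow>
            bounded (range (\<lambda>k. (1 / t j k) *\<^sub>R ubar j k)))"
proof -
  interpret lax_sequence_with_ratios N H J x t v v_inf xs ubar \<alpha>
    using N hH hJ t_pos t_lim v_lim ratio_lim xs_def x_dom min
    by unfold_locales (auto simp: H1_def)
  show ?thesis
    using minimizers_tendsto_zero minimizer_over_t1_tendsto_zero minimizer_over_ti_bounded
    by blast
qed

end
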